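(* In the stochastic approximation setting described in the context (with $\mu>0$ chosen so that $\alpha_2>0$), suppose $\epsilon_k\equiv\epsilon\le\alpha_2/\alpha_3$ for all $k$. Then for all $k\ge0$, $$\mathbb{E}[\|x_k-x^*\|_c^2]\le\alpha_1\|x_0-x^*\|_c^2(1-\alpha_2\epsilon)^k+(A+2B\|x^*\|_c^2)\frac{\alpha_4\epsilon}{\alpha_2}.$$
   Context: Let $\|\cdot\|_c,\|\cdot\|_e$ be arbitrary norms on $\mathbb{R}^d$. Let $\mathcal H:\mathbb{R}^d\to\mathbb{R}^d$ satisfy $\|\mathcal H(x)-\mathcal H(y)\|_c\le\gamma\|x-y\|_c$ for all $x,y$, for some $\gamma\in(0,1)$, and let $x^*$ be its unique fixed point. Fix a deterministic $x_0\in\mathbb{R}^d$ and define $x_{k+1}=x_k+\epsilon_k(\mathcal H(x_k)-x_k+w_k)$, where $\{w_k\}$ are random vectors such that, letting $\mathcal F_k$ be the $\sigma$-algebra generated by $x_0,w_0,\dots,x_{k-1},w_{k-1},x_k$, for all $k\ge0$: $\mathbb{E}[w_k\mid\mathcal F_k]=0$ and $\mathbb{E}[\|w_k\|_e^2\mid\mathcal F_k]\le A+B\|x_k\|_e^2$ for constants $A,B>0$. A convex differentiable $h$ is $L$-smooth w.r.t. a norm $\|\cdot\|$ if $h(y)\le h(x)+\langle\nabla h(x),y-x\rangle+\frac L2\|x-y\|^2$ for all $x,y$. Let $\|\cdot\|_s$ be a norm such that $g(x)=\frac12\|x\|_s^2$ is $L$-smooth w.r.t. $\|\cdot\|_s$,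 and let $\ell_{cs},\ell_{es}\in(0,1]$, $u_{cs},u_{es}\in[1,\infty)$ satisfy $\ell_{cs}\|x\|_c\le\|x\|_s\le u_{cs}\|x\|_c$ and $\ell_{es}\|x\|_e\le\|x\|_s\le u_{es}\|x\|_e$ for all $x$. For $\mu>0$ define $\alpha_1=\frac{1+\mu/\ell_{cs}^2}{1+\mu/u_{cs}^2}$, $\alpha_2=1-\gamma\alpha_1^{1/2}$, $\alpha_3=\frac{4u_{cs}^2u_{es}^2(B+2)L(\ell_{cs}^2+\mu)}{\mu\ell_{cs}^2\ell_{es}^2}$, $\alpha_4=\frac{\alpha_3}{2(B+2)}$; $\mu$ is chosen so that $\alpha_2>0$. *)

theory Defs
  imports "HOL-Analysis.Analysis" "HOL-Probability.Probability"
begin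

definition is_norm :: "(real ^ 'n \<Rightarrow> real) \<Rightarrow> bool" where
  "is_norm N \<longleftrightarrow> (\<forall>x. N x = 0 \<longleftrightarrow> x = 0) \<and> (\<forall>c x. N (c *\<^sub>R x) = \<bar>c\<bar> * N x)
     \<and> (\<forall>x y. N (x + y) \<le> N x + N y)"

text \<open>h is convex, differentiable and L-smooth w.r.t. the norm N; the inner product of the
  gradient with y - x is the Frechet derivative D applied to y - x.\<close>
definition L_smooth :: "(real ^ 'n \<Rightarrow> real) \<Rightarrow> (real ^ 'n \<Rightarrow> real) \<Rightarrow> real \<Rightarrow> bool" where
  "L_smooth h N L \<longleftrightarrow> convex_on UNIV h \<and>
     (\<forall>x. \<exists>D. (h has_derivative D) (at x) \<and>
        (\<forall>y. h y \<le> h x + D (y - x) + L / 2 * (N (x - y))\<^sup>2))"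

primrec SA_iter :: "(real ^ 'n \<Rightarrow> real ^ 'n) \<Rightarrow> (nat \<Rightarrow> real) \<Rightarrow> real ^ 'n
    \<Rightarrow> (nat \<Rightarrow> 'a \<Rightarrow> real ^ 'n) \<Rightarrow> nat \<Rightarrow> 'a \<Rightarrow> real ^ 'n" where
  "SA_iter H eps x0 w 0 = (\<lambda>\<omega>. x0)"
| "SA_iter H eps x0 w (Suc k) = (\<lambda>\<omega>. SA_iter H eps x0 w k \<omega> +
      eps k *\<^sub>R (H (SA_iter H eps x0 w k \<omega>) - SA_iter H eps x0 w k \<omega> + w k \<omega>))"

definition SA_filt :: "'a measure \<Rightarrow> (nat \<Rightarrow> 'a \<Rightarrow> real ^ 'n) \<Rightarrow> (nat \<Rightarrow> 'a \<Rightarrow> real ^ 'n)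
    \<Rightarrow> nat \<Rightarrow> 'a measure" where
  "SA_filt M X w k = sigma (space M)
     ((\<Union>j\<in>{..k}. {X j -` B \<inter> space M | B. B \<in> sets borel})
      \<union> (\<Union>j\<in>{..<k}. {w j -` B \<inter> space M | B. B \<in> sets borel}))"

end

theory Submission
  imports Defs
begin

text \<open>The Lyapunov function is the generalized Moreau envelope
  M(y) = min_u (nc(u)^2 / 2 + ns(y - u)^2 / (2 mu)). It is convex, 2-homogeneous and comparable
  to nc^2 / 2, and it inherits from the L-smooth function ns^2 / 2 a quadratic upper expansion with
  a linear gradient G(y). Convexity and homogeneity turn G(y) into a subgradient with
  G(y) y = 2 M(y) and G(y) z <= 2 sqrt (M(y) M(z)); for the contraction H this yields, in one step
  of the iteration, the drift -2 alpha2 eps M(x_k - x*). The noise has zero conditional mean, so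
  its linear term vanishes in expectation, and its conditional variance A + B ne(x_k)^2 costs
  O(eps^2) times the mean square error plus a constant. For eps <= alpha2 / alpha3 this gives
  E M(x_(k+1) - x*) <= (1 - alpha2 eps) E M(x_k - x*) + O(eps^2), which is unrolled and compared
  back with nc^2.\<close>

locale norm_function =
  fixes N :: "real^'n \<Rightarrow> real"
  assumes is_norm: "is_norm N"
begin

lemma eq_0_iff: "N x = 0 \<longleftrightarrow> x = 0"
  using is_norm unfolding is_norm_def by blast

lemma zero [simp]: "N 0 = 0"
  using eq_0_iff by blast

lemma scaleR: "N (c *\<^sub>R x) = \<bar>c\<bar> * N x"
  using is_norm unfolding is_norm_def by blast

lemma triangle: "N (x + y) \<le> N x + N y"
  using is_norm unfolding is_norm_def by blast

lemma minus [simp]: "N (- x) = N x"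
  using scaleR[of "-1" x] by simp

lemma nonneg [simp]: "0 \<le> N x"
  using triangle[of x "- x"] by simp

lemma minus_commute: "N (x - y) = N (y - x)"
  using minus[of "x - y"] by simp

lemma power2_scaleR: "(N (c *\<^sub>R x))\<^sup>2 = c\<^sup>2 * (N x)\<^sup>2"
  by (simp add: scaleR power_mult_distrib)

lemma sum: "finite S \<Longrightarrow> N (sum f S) \<le> (\<Sum>i\<in>S. N (f i))"
  by (induction S rule: finite_induct) (auto intro: order_trans[OF triangle])

lemma power2_triangle: "(N (x + y))\<^sup>2 \<le> 2 * (N x)\<^sup>2 + 2 * (N y)\<^sup>2"
proof -
  have "(N (x + y))\<^sup>2 \<le> (N x + N y)\<^sup>2"
    using triangle by (intro power_mono) auto
  also have "\<dots> \<le> 2 * (N x)\<^sup>2 + 2 * (N y)\<^sup>2"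
    using sum_squares_bound[of "N x" "N y"] by (simp add: power2_sum)
  finally show ?thesis .
qed

lemma convex: "convex_on UNIV N"
proof (rule convex_onI)
  fix t :: real and x y :: "real^'n" assume "0 < t" "t < 1"
  then show "N ((1 - t) *\<^sub>R x + t *\<^sub>R y) \<le> (1 - t) * N x + t * N y"
    using triangle[of "(1 - t) *\<^sub>R x" "t *\<^sub>R y"] by (simp add: scaleR)
qed simp

lemma power2_convex:
  assumes "0 \<le> u" "0 \<le> v" "u + v = 1"
  shows "(N (u *\<^sub>R x + v *\<^sub>R y))\<^sup>2 \<le> u * (N x)\<^sup>2 + v * (N y)\<^sup>2"
proof -
  have "N (u *\<^sub>R x + v *\<^sub>R y) \<le> u * N x + v * N y"
    using convex assms unfolding convex_on_def by auto
  then have "(N (u *\<^sub>R x + v *\<^sub>R y))\<^sup>2 \<le> (u * N x + v * N y)\<^sup>2"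
    by (intro power_mono) auto
  also have "(u * N x + v * N y)\<^sup>2 = u * (N x)\<^sup>2 + v * (N y)\<^sup>2 - u * v * (N x - N y)\<^sup>2"
  proof -
    have v: "v = 1 - u" using assms(3) by simp
    show ?thesis unfolding v by (simp add: power2_eq_square algebra_simps)
  qed
  also have "\<dots> \<le> u * (N x)\<^sup>2 + v * (N y)\<^sup>2"
    using assms by simp
  finally show ?thesis .
qed

lemma continuous: "continuous_on UNIV N"
  by (rule convex_on_continuous[OF open_UNIV convex])

lemma borel_measurable: "N \<in> borel_measurable borel"
  by (rule borel_measurable_continuous_onI[OF continuous])

lemma le_norm: obtains C where "0 \<le> C" "\<And>x. N x \<le> C * norm x"
proof
  show "0 \<le> (\<Sum>i\<in>UNIV. N (axis i 1))"
    by (simp add: sum_nonneg)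
  fix x :: "real^'n"
  have "N x = N (\<Sum>i\<in>UNIV. (x $ i) *\<^sub>R axis i (1::real))"
    using basis_expansion[of x] by (simp add: scalar_mult_eq_scaleR)
  also have "\<dots> \<le> (\<Sum>i\<in>UNIV. \<bar>x $ i\<bar> * N (axis i 1))"
    by (rule order_trans[OF sum]) (simp_all add: scaleR)
  also have "\<dots> \<le> (\<Sum>i\<in>UNIV. norm x * N (axis i 1))"
    by (intro sum_mono mult_right_mono) (auto simp: component_le_norm_cart)
  finally show "N x \<le> (\<Sum>i\<in>UNIV. N (axis i 1)) * norm x"
    by (simp add: sum_distrib_left mult.commute)
qed

lemma ge_norm: obtains c where "0 < c" "\<And>x. c * norm x \<le> N x"
proof -
  obtain i :: 'n where True by simp
  have "axis i (1::real) \<in> sphere (0::real^'n) 1"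
    by (simp add: norm_axis_1)
  then obtain u where u: "u \<in> sphere (0::real^'n) 1" "\<And>v. v \<in> sphere 0 1 \<Longrightarrow> N u \<le> N v"
    using continuous_attains_inf[OF compact_sphere _ continuous_on_subset[OF continuous]] by blast
  have "u \<noteq> 0"
    using u(1) by auto
  then have pos: "0 < N u"
    using eq_0_iff nonneg by (metis less_eq_real_def)
  have bound: "N u * norm x \<le> N x" for x
  proof (cases "x = 0")
    case False
    then have "N u \<le> N ((1 / norm x) *\<^sub>R x)"
      by (intro u(2)) simp
    with False show ?thesis
      by (simp add: scaleR field_simps)
  qed simp
  show ?thesis
    by (rule that[OF pos bound])
qed

lemma lipschitz_continuous:
  assumes "0 \<le> K" "\<And>u v. N (f u - f v) \<le> K * N (u - v)"
  shows "continuous_on UNIV f"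
proof -
  obtain c where c: "0 < c" "\<And>x. c * norm x \<le> N x" using ge_norm by blast
  obtain C where C: "0 \<le> C" "\<And>x. N x \<le> C * norm x" using le_norm by blast
  have "(K * C / c)-lipschitz_on UNIV f"
  proof (rule lipschitz_onI)
    fix u v :: "real^'n"
    have "c * norm (f u - f v) \<le> K * (C * norm (u - v))"
      using c(2) assms(2) C(2) mult_left_mono[OF C(2) assms(1)] order_trans by metis
    then show "dist (f u) (f v) \<le> K * C / c * dist u v"
      using c(1) by (simp add: dist_norm field_simps)
  qed (use assms C c in auto)
  then show ?thesis
    by (rule lipschitz_on_continuous_on)
qed

end

lemma le_of_forall_le_add_mult:
  fixes a b c :: real
  assumes "\<And>t. 0 < t \<Longrightarrow> t < 1 \<Longrightarrow> a \<le> b + t * c"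
  shows "a \<le> b"
proof (cases "c \<le> 0")
  case True
  then show ?thesis
    using assms[of "1/2"] by simp
next
  case False
  show ?thesis
  proof (rule field_le_epsilon)
    fix e :: real assume "0 < e"
    define t where "t = min (1/2) (e / c)"
    have t: "0 < t" "t < 1"
      using False \<open>0 < e\<close> by (auto simp: t_def)
    have "t * c \<le> e / c * c"
      using False by (intro mult_right_mono) (auto simp: t_def)
    then show "a \<le> b + e"
      using assms[OF t] False by simp
  qed
qed

lemma le_two_sqrt_mult_of_forall:
  fixes g a b :: real
  assumes "0 \<le> a" "0 \<le> b" and le: "\<And>s. 0 < s \<Longrightarrow> g \<le> s * a + b / s"
  shows "g \<le> 2 * sqrt (a * b)"
proof (cases "a = 0 \<or> b = 0")
  case True
  have "g \<le> 0 + t * (a + b)" if "0 < t" "t < 1" for t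
    using True le[of t] le[of "1 / t"] that assms by (auto simp: mult.commute)
  then have "g \<le> 0"
    by (rule le_of_forall_le_add_mult)
  moreover have "0 \<le> 2 * sqrt (a * b)"
    using assms by simp
  ultimately show ?thesis
    by linarith
next
  case False
  with assms have "0 < a" "0 < b" by auto
  then have "sqrt (b / a) * a = sqrt (a * b)" "b / sqrt (b / a) = sqrt (a * b)"
    by (simp_all add: real_sqrt_divide real_sqrt_mult field_simps)
  then show ?thesis
    using le[of "sqrt (b / a)"] \<open>0 < a\<close> \<open>0 < b\<close> by simp
qed

lemma recurrence_le_geometric:
  fixes u :: "nat \<Rightarrow> real"
  assumes step: "\<And>k. u (Suc k) \<le> q * u k + b" and "0 \<le> q" "q < 1" "0 \<le> b"
  shows "u k \<le> q ^ k * u 0 + b / (1 - q)"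
proof (induction k)
  case 0
  show ?case using assms by simp
next
  case (Suc k)
  have "u (Suc k) \<le> q * (q ^ k * u 0 + b / (1 - q)) + b"
    using step[of k] Suc \<open>0 \<le> q\<close> by (meson add_right_mono mult_left_mono order_trans)
  also have "\<dots> = q ^ Suc k * u 0 + b / (1 - q)"
    using \<open>q < 1\<close> by (simp add: field_simps)
  finally show ?case .
qed

lemma linear_eq_sum_axis:
  fixes f :: "real^'n \<Rightarrow> real"
  assumes "linear f"
  shows "f v = (\<Sum>i\<in>UNIV. v $ i * f (axis i 1))"
proof -
  have "f v = f (\<Sum>i\<in>UNIV. (v $ i) *\<^sub>R axis i (1::real))"
    using basis_expansion[of v] by (simp add: scalar_mult_eq_scaleR)
  then show ?thesis
    by (simp add: linear_sum[OF assms] linear_scale[OF assms])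
qed

lemma integrable_if_abs_le:
  fixes f g :: "'a \<Rightarrow> real"
  assumes "integrable M f" "g \<in> borel_measurable M" "\<And>x. x \<in> space M \<Longrightarrow> \<bar>g x\<bar> \<le> f x"
  shows "integrable M g"
  using assms(3) by (intro Bochner_Integration.integrable_bound[OF assms(1,2)] AE_I2)
    (auto intro: order_trans[OF _ abs_ge_self])

text \<open>Convexity on the segment from y to y + h and at the midpoint of y +- t h, together with the
  expansion at -t h, gives t (V y + G h) <= t V (y + h) + O(t^2).\<close>

lemma (in norm_function) subgradient_of_convex_upper_expansion:
  fixes V G :: "real^'n \<Rightarrow> real"
  assumes "convex_on UNIV V" "linear G"
    and upper: "\<And>h. V (y + h) \<le> V y + G h + K * (N h)\<^sup>2"
  shows "V y + G h \<le> V (y + h)"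
proof (rule le_of_forall_le_add_mult)
  fix t :: real assume t: "0 < t" "t < 1"
  have "V (y + t *\<^sub>R h) = V ((1 - t) *\<^sub>R y + t *\<^sub>R (y + h))"
    by (simp add: algebra_simps)
  also have "\<dots> \<le> (1 - t) * V y + t * V (y + h)"
    using t by (intro convex_onD[OF assms(1)]) auto
  finally have segment: "V (y + t *\<^sub>R h) \<le> (1 - t) * V y + t * V (y + h)" .
  have "(1 - 1/2) *\<^sub>R (y + t *\<^sub>R h) + (1/2) *\<^sub>R (y - t *\<^sub>R h) = y"
    by (simp add: algebra_simps flip: scaleR_add_left)
  moreover have "V ((1 - 1/2) *\<^sub>R (y + t *\<^sub>R h) + (1/2) *\<^sub>R (y - t *\<^sub>R h))
      \<le> (1 - 1/2) * V (y + t *\<^sub>R h) + (1/2) * V (y - t *\<^sub>R h)"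
    by (rule convex_onD[OF assms(1)]) auto
  ultimately have midpoint: "2 * V y \<le> V (y + t *\<^sub>R h) + V (y - t *\<^sub>R h)"
    by simp
  have "V (y + (- t) *\<^sub>R h) \<le> V y + G ((- t) *\<^sub>R h) + K * (N ((- t) *\<^sub>R h))\<^sup>2"
    by (rule upper)
  then have reflected: "V (y - t *\<^sub>R h) \<le> V y - t * G h + K * t\<^sup>2 * (N h)\<^sup>2"
    by (simp add: linear_neg[OF assms(2)] linear_scale[OF assms(2)] power2_scaleR)
  have "t * (V y + G h) \<le> t * (V (y + h) + t * (K * (N h)\<^sup>2))"
    using segment midpoint reflected by (simp add: algebra_simps power2_eq_square)
  then show "V y + G h \<le> V (y + h) + t * (K * (N h)\<^sup>2)"
    using t by simp
qed

lemma homogeneous_subgradient_self: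
  fixes V G :: "'a::real_vector \<Rightarrow> real"
  assumes hom: "\<And>t z. V (t *\<^sub>R z) = t\<^sup>2 * V z" and "linear G"
    and sub: "\<And>h. V y + G h \<le> V (y + h)"
  shows "G y = 2 * V y"
proof (rule antisym)
  show "G y \<le> 2 * V y"
  proof (rule le_of_forall_le_add_mult)
    fix t :: real assume t: "0 < t" "t < 1"
    have "V y + t * G y \<le> (1 + t)\<^sup>2 * V y"
      using sub[of "t *\<^sub>R y"] hom[of "1 + t" y] by (simp add: linear_scale[OF assms(2)] scaleR_add_left)
    then have "t * G y \<le> t * (2 * V y + t * V y)"
      by (simp add: power2_eq_square algebra_simps)
    then show "G y \<le> 2 * V y + t * V y"
      using t by simp
  qed
  show "2 * V y \<le> G y"
  proof (rule le_of_forall_le_add_mult)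
    fix t :: real assume t: "0 < t" "t < 1"
    have "V y - t * G y \<le> (1 - t)\<^sup>2 * V y"
      using sub[of "(- t) *\<^sub>R y"] hom[of "1 - t" y]
      by (simp add: linear_neg[OF assms(2)] linear_scale[OF assms(2)] scaleR_diff_left)
    then have "t * (2 * V y) \<le> t * (G y + t * V y)"
      by (simp add: power2_eq_square algebra_simps)
    then show "2 * V y \<le> G y + t * V y"
      using t by simp
  qed
qed

text \<open>Test the subgradient inequality at s z - y and optimize over s > 0.\<close>

lemma homogeneous_subgradient_le_sqrt:
  fixes V G :: "'a::real_vector \<Rightarrow> real"
  assumes hom: "\<And>t z. V (t *\<^sub>R z) = t\<^sup>2 * V z" and "linear G"
    and sub: "\<And>h. V y + G h \<le> V (y + h)" and nonneg: "\<And>z. 0 \<le> V z"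
  shows "G z \<le> sqrt (2 * V y) * sqrt (2 * V z)"
proof -
  have "G z \<le> s * V z + V y / s" if "0 < s" for s
  proof -
    have "V y + G (s *\<^sub>R z - y) \<le> V (s *\<^sub>R z)"
      using sub[of "s *\<^sub>R z - y"] by simp
    then have "s * G z \<le> s * (s * V z + V y / s)"
      using homogeneous_subgradient_self[OF hom assms(2) sub] that
      by (simp add: hom linear_diff[OF assms(2)] linear_scale[OF assms(2)] power2_eq_square
          algebra_simps)
    then show ?thesis
      using that by simp
  qed
  then have "G z \<le> 2 * sqrt (V z * V y)"
    by (rule le_two_sqrt_mult_of_forall[OF nonneg nonneg])
  also have "\<dots> = sqrt (2 * V y) * sqrt (2 * V z)"
    using nonneg by (simp add: real_sqrt_mult)
  finally show ?thesis .
qed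

text \<open>G y h is the limit of the measurable difference quotients of V, squeezed by the two bounds.\<close>

lemma (in norm_function) borel_measurable_gradient:
  fixes V :: "real^'n \<Rightarrow> real" and G :: "real^'n \<Rightarrow> real^'n \<Rightarrow> real"
  assumes [measurable]: "V \<in> borel_measurable borel" and lin: "\<And>y. linear (G y)"
    and lower: "\<And>y h. V y + G y h \<le> V (y + h)"
    and upper: "\<And>y h. V (y + h) \<le> V y + G y h + K * (N h)\<^sup>2"
  shows "(\<lambda>y. G y h) \<in> borel_measurable borel"
proof (rule borel_measurable_LIMSEQ_real)
  define q where "q i y = (V (y + (1 / real (Suc i)) *\<^sub>R h) - V y) * real (Suc i)" for i y
  show "q i \<in> borel_measurable borel" for i
    unfolding q_def by measurable
  fix y
  have bound: "norm (q i y - G y h) \<le> K * (N h)\<^sup>2 / real (Suc i)" for i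
  proof -
    define t where "t = 1 / real (Suc i)"
    have t: "0 < t"
      by (simp add: t_def)
    have q: "q i y = (V (y + t *\<^sub>R h) - V y) / t"
      by (simp add: q_def t_def)
    have "t * G y h \<le> V (y + t *\<^sub>R h) - V y"
      using lower[of y "t *\<^sub>R h"] by (simp add: linear_scale[OF lin])
    then have "G y h \<le> q i y"
      unfolding q using t by (simp add: pos_le_divide_eq mult.commute)
    moreover have "V (y + t *\<^sub>R h) - V y \<le> t * (G y h + K * (N h)\<^sup>2 * t)"
      using upper[of y "t *\<^sub>R h"]
      by (simp add: linear_scale[OF lin] power2_scaleR power2_eq_square[of t] algebra_simps)
    then have "q i y \<le> G y h + K * (N h)\<^sup>2 * t"
      unfolding q using t by (simp add: pos_divide_le_eq mult.commute)
    ultimately have "\<bar>q i y - G y h\<bar> \<le> K * (N h)\<^sup>2 * t"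
      by linarith
    then show ?thesis
      by (simp add: t_def)
  qed
  have "(\<lambda>i. K * (N h)\<^sup>2 / real (Suc i)) \<longlonglongrightarrow> 0"
    using LIMSEQ_Suc[OF lim_const_over_n[of "K * (N h)\<^sup>2"]] by simp
  then have "(\<lambda>i. q i y - G y h) \<longlonglongrightarrow> 0"
    by (rule Lim_null_comparison[OF always_eventually[OF allI[OF bound]]])
  then show "(\<lambda>i. q i y) \<longlonglongrightarrow> G y h"
    by (simp add: LIM_zero_iff)
qed

locale moreau_envelope =
  nc: norm_function nc + ns: norm_function ns
  for nc ns :: "real^'n \<Rightarrow> real" +
  fixes L \<mu> lcs ucs :: real
  assumes smooth: "L_smooth (\<lambda>u. (ns u)\<^sup>2 / 2) ns L"
    and mu_pos: "0 < \<mu>" and lcs_pos: "0 < lcs" and ucs_ge_1: "1 \<le> ucs"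
    and ns_ge_nc: "\<And>u. lcs * nc u \<le> ns u" and ns_le_nc: "\<And>u. ns u \<le> ucs * nc u"
begin

definition envelope_objective :: "real^'n \<Rightarrow> real^'n \<Rightarrow> real" where
  "envelope_objective y u = (nc u)\<^sup>2 / 2 + (ns (y - u))\<^sup>2 / (2 * \<mu>)"

definition envelope :: "real^'n \<Rightarrow> real" where
  "envelope y = (INF u. envelope_objective y u)"

definition prox :: "real^'n \<Rightarrow> real^'n" where
  "prox y = (SOME u. envelope_objective y u = envelope y)"

definition lower_factor :: real where
  "lower_factor = 1 / (1 + \<mu> / lcs\<^sup>2)"

definition upper_factor :: real where
  "upper_factor = 1 / (1 + \<mu> / ucs\<^sup>2)"

lemma envelope_objective_nonneg: "0 \<le> envelope_objective y u"
  using mu_pos by (simp add: envelope_objective_def)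

lemma envelope_le: "envelope y \<le> envelope_objective y u"
  unfolding envelope_def
  by (rule cInf_lower) (auto intro: bdd_belowI[of _ 0] envelope_objective_nonneg)

lemma envelope_nonneg: "0 \<le> envelope y"
  unfolding envelope_def by (rule cINF_greatest) (auto simp: envelope_objective_nonneg)

lemma continuous_on_envelope_objective: "continuous_on UNIV (envelope_objective y)"
proof -
  have "continuous_on UNIV (\<lambda>u. ns (y - u))"
    by (rule continuous_on_compose2[OF ns.continuous]) (auto intro: continuous_intros)
  then show ?thesis
    unfolding envelope_objective_def[abs_def] using nc.continuous mu_pos
    by (intro continuous_intros) auto
qed

text \<open>The objective is coercive, so its infimum is attained on a large enough ball.\<close>

lemma envelope_attained: "\<exists>u. envelope_objective y u = envelope y"
proof -
  obtain c where c: "0 < c" "\<And>x. c * norm x \<le> nc x"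
    using nc.ge_norm by blast
  define R where "R = sqrt (2 * envelope_objective y 0) / c + 1"
  have "0 < R"
    using c envelope_objective_nonneg[of y 0] by (simp add: R_def add_nonneg_pos)
  then obtain u where u: "\<And>v. v \<in> cball 0 R \<Longrightarrow> envelope_objective y u \<le> envelope_objective y v"
    using continuous_attains_inf[OF compact_cball _
        continuous_on_subset[OF continuous_on_envelope_objective]]
    by (metis empty_iff centre_in_cball less_imp_le subset_UNIV)
  have "envelope_objective y u \<le> envelope_objective y v" for v
  proof (cases "v \<in> cball 0 R")
    case False
    then have "c * R < c * norm v"
      using c(1) by simp
    moreover have "c * R = sqrt (2 * envelope_objective y 0) + c"
      using c(1) by (simp add: R_def field_simps)
    ultimately have "sqrt (2 * envelope_objective y 0) < nc v"
      using c(1) c(2)[of v] by linarith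
    then have "(sqrt (2 * envelope_objective y 0))\<^sup>2 < (nc v)\<^sup>2"
      by (intro power_strict_mono) (auto simp: envelope_objective_nonneg)
    then have "2 * envelope_objective y 0 < (nc v)\<^sup>2"
      using envelope_objective_nonneg[of y 0] by simp
    moreover have "0 \<le> (ns (y - v))\<^sup>2 / (2 * \<mu>)"
      using mu_pos by simp
    ultimately have "envelope_objective y 0 \<le> envelope_objective y v"
      unfolding envelope_objective_def[of y v] by linarith
    then show ?thesis
      using u[of 0] \<open>0 < R\<close> by simp
  qed (rule u)
  then have "envelope y = envelope_objective y u"
    unfolding envelope_def by (intro antisym cINF_greatest cInf_lower bdd_belowI) auto
  then show ?thesis
    by metis
qed

lemma envelope_objective_prox: "envelope_objective y (prox y) = envelope y"
  unfolding prox_def by (rule someI_ex[OF envelope_attained])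

definition smoothing_deriv :: "real^'n \<Rightarrow> real^'n \<Rightarrow> real" where
  "smoothing_deriv a = (SOME D. ((\<lambda>u. (ns u)\<^sup>2 / 2) has_derivative D) (at a) \<and>
     (\<forall>z. (ns z)\<^sup>2 / 2 \<le> (ns a)\<^sup>2 / 2 + D (z - a) + L / 2 * (ns (a - z))\<^sup>2))"

lemma smoothing_deriv_spec:
  shows "((\<lambda>u. (ns u)\<^sup>2 / 2) has_derivative smoothing_deriv a) (at a)"
    and "(ns z)\<^sup>2 / 2 \<le> (ns a)\<^sup>2 / 2 + smoothing_deriv a (z - a) + L / 2 * (ns (a - z))\<^sup>2"
proof -
  have "\<exists>D. ((\<lambda>u. (ns u)\<^sup>2 / 2) has_derivative D) (at a) \<and>
      (\<forall>z. (ns z)\<^sup>2 / 2 \<le> (ns a)\<^sup>2 / 2 + D (z - a) + L / 2 * (ns (a - z))\<^sup>2)"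
    using smooth unfolding L_smooth_def by blast
  from someI_ex[OF this, folded smoothing_deriv_def]
  show "((\<lambda>u. (ns u)\<^sup>2 / 2) has_derivative smoothing_deriv a) (at a)"
    and "(ns z)\<^sup>2 / 2 \<le> (ns a)\<^sup>2 / 2 + smoothing_deriv a (z - a) + L / 2 * (ns (a - z))\<^sup>2"
    by blast+
qed

lemma linear_smoothing_deriv: "linear (smoothing_deriv a)"
  using smoothing_deriv_spec(1) has_derivative_bounded_linear bounded_linear.linear by blast

text \<open>Evaluate the smoothness inequality at the base point 0 in the directions z and -z.\<close>

lemma smoothness_const_ge_1: "1 \<le> L"
proof -
  obtain i :: 'n where True by simp
  have "0 < ns (axis i 1)"
    using ns.eq_0_iff ns.nonneg by (metis axis_eq_0_iff less_eq_real_def zero_neq_one)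
  moreover have "(ns z)\<^sup>2 / 2 \<le> smoothing_deriv 0 z + L / 2 * (ns z)\<^sup>2" for z
    using smoothing_deriv_spec(2)[of z 0] by simp
  from this[of "axis i 1"] this[of "- axis i 1"]
  have "(ns (axis i 1))\<^sup>2 \<le> L * (ns (axis i 1))\<^sup>2"
    by (simp add: linear_neg[OF linear_smoothing_deriv])
  ultimately show ?thesis
    by simp
qed

text \<open>By Danskin's theorem this is the gradient of the envelope; below it is only used through the
  upper expansion and the subgradient inequality it satisfies.\<close>

definition envelope_grad :: "real^'n \<Rightarrow> real^'n \<Rightarrow> real" where
  "envelope_grad y h = smoothing_deriv (y - prox y) h / \<mu>"

lemma linear_envelope_grad: "linear (envelope_grad y)"
  unfolding envelope_grad_def[abs_def]
  by (rule linearI) (simp_all add: linear_add[OF linear_smoothing_deriv]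
      linear_scale[OF linear_smoothing_deriv] add_divide_distrib)

lemma envelope_upper_expansion:
  "envelope (y + h) \<le> envelope y + envelope_grad y h + L / (2 * \<mu>) * (ns h)\<^sup>2"
proof -
  define a where "a = y - prox y"
  have "(ns (a + h))\<^sup>2 / 2 \<le> (ns a)\<^sup>2 / 2 + smoothing_deriv a h + L / 2 * (ns h)\<^sup>2"
    using smoothing_deriv_spec(2)[of "a + h" a] by simp
  then have "(ns (a + h))\<^sup>2 / (2 * \<mu>)
      \<le> (ns a)\<^sup>2 / (2 * \<mu>) + envelope_grad y h + L / (2 * \<mu>) * (ns h)\<^sup>2"
    using mu_pos by (simp add: envelope_grad_def a_def field_simps)
  then have "envelope_objective (y + h) (prox y)
      \<le> envelope_objective y (prox y) + envelope_grad y h + L / (2 * \<mu>) * (ns h)\<^sup>2"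
    by (simp add: envelope_objective_def a_def algebra_simps)
  then show ?thesis
    using envelope_le[of "y + h" "prox y"] by (simp add: envelope_objective_prox)
qed

lemma convex_on_envelope: "convex_on UNIV envelope"
proof (rule convex_onI)
  fix t :: real and a b :: "real^'n" assume t: "0 < t" "t < 1"
  define p where "p = prox a"
  define q where "q = prox b"
  have "envelope ((1 - t) *\<^sub>R a + t *\<^sub>R b) \<le> envelope_objective ((1 - t) *\<^sub>R a + t *\<^sub>R b) ((1 - t) *\<^sub>R p + t *\<^sub>R q)"
    by (rule envelope_le)
  also have "\<dots> = (nc ((1 - t) *\<^sub>R p + t *\<^sub>R q))\<^sup>2 / 2
      + (ns ((1 - t) *\<^sub>R (a - p) + t *\<^sub>R (b - q)))\<^sup>2 / (2 * \<mu>)"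
    by (simp add: envelope_objective_def algebra_simps)
  also have "\<dots> \<le> ((1 - t) * (nc p)\<^sup>2 + t * (nc q)\<^sup>2) / 2
      + ((1 - t) * (ns (a - p))\<^sup>2 + t * (ns (b - q))\<^sup>2) / (2 * \<mu>)"
    using nc.power2_convex[of "1 - t" t p q] ns.power2_convex[of "1 - t" t "a - p" "b - q"] t mu_pos
    by (intro add_mono divide_right_mono) auto
  also have "\<dots> = (1 - t) * envelope_objective a p + t * envelope_objective b q"
    using mu_pos by (simp add: envelope_objective_def field_simps)
  finally show "envelope ((1 - t) *\<^sub>R a + t *\<^sub>R b) \<le> (1 - t) * envelope a + t * envelope b"
    by (simp add: p_def q_def envelope_objective_prox)
qed simp

lemma borel_measurable_envelope: "envelope \<in> borel_measurable borel"
  by (rule borel_measurable_continuous_onI[OF convex_on_continuous[OF open_UNIV convex_on_envelope]])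

lemma envelope_scaleR_le: "envelope (t *\<^sub>R y) \<le> t\<^sup>2 * envelope y"
proof -
  have "envelope (t *\<^sub>R y) \<le> envelope_objective (t *\<^sub>R y) (t *\<^sub>R prox y)"
    by (rule envelope_le)
  also have "\<dots> = t\<^sup>2 * envelope_objective y (prox y)"
    unfolding envelope_objective_def scaleR_diff_right[symmetric] nc.power2_scaleR ns.power2_scaleR
    by (simp add: distrib_left)
  finally show ?thesis
    by (simp add: envelope_objective_prox)
qed

lemma envelope_scaleR: "envelope (t *\<^sub>R y) = t\<^sup>2 * envelope y"
proof (cases "t = 0")
  case True
  have "envelope 0 \<le> envelope_objective 0 0"
    by (rule envelope_le)
  then show ?thesis
    using True envelope_nonneg[of 0] by (simp add: envelope_objective_def)
next
  case False
  have "envelope y \<le> (1 / t)\<^sup>2 * envelope (t *\<^sub>R y)"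
    using envelope_scaleR_le[of "1 / t" "t *\<^sub>R y"] False by simp
  then have "t\<^sup>2 * envelope y \<le> envelope (t *\<^sub>R y)"
    using False by (simp add: field_simps)
  then show ?thesis
    using envelope_scaleR_le[of t y] by simp
qed

lemma lower_factor_pos: "0 < lower_factor"
  using mu_pos lcs_pos by (simp add: lower_factor_def add_pos_pos)

lemma upper_factor_pos: "0 < upper_factor"
  using mu_pos ucs_ge_1 by (simp add: upper_factor_def add_pos_pos)

lemma upper_factor_le_1: "upper_factor \<le> 1"
  using mu_pos ucs_ge_1 by (simp add: upper_factor_def divide_le_eq_1 add_pos_nonneg)

text \<open>The upper bound tests the objective at the point t y with t = ucs^2 / (ucs^2 + mu).\<close>

lemma envelope_upper_bound: "2 * envelope y \<le> upper_factor * (nc y)\<^sup>2"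
proof -
  define k where "k = ucs\<^sup>2"
  define s where "s = k + \<mu>"
  define t where "t = k / s"
  have k: "0 < k" and s: "0 < s"
    using ucs_ge_1 mu_pos by (simp_all add: k_def s_def add_pos_pos)
  have t: "1 - t = \<mu> / s"
    using s by (simp add: t_def s_def field_simps)
  then have "0 \<le> 1 - t"
    using s mu_pos by simp
  then have "ns ((1 - t) *\<^sub>R y) \<le> (1 - t) * (ucs * nc y)"
    using ns_le_nc[of y] by (simp add: ns.scaleR mult_left_mono)
  then have "(ns ((1 - t) *\<^sub>R y))\<^sup>2 \<le> ((1 - t) * (ucs * nc y))\<^sup>2"
    by (rule power_mono) simp
  then have ns_bound: "(ns ((1 - t) *\<^sub>R y))\<^sup>2 \<le> (1 - t)\<^sup>2 * k * (nc y)\<^sup>2"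
    by (simp add: k_def power_mult_distrib)
  have "envelope y \<le> envelope_objective y (t *\<^sub>R y)"
    by (rule envelope_le)
  also have "\<dots> = t\<^sup>2 * (nc y)\<^sup>2 / 2 + (ns ((1 - t) *\<^sub>R y))\<^sup>2 / (2 * \<mu>)"
    by (simp add: envelope_objective_def nc.power2_scaleR scaleR_diff_left)
  also have "\<dots> \<le> t\<^sup>2 * (nc y)\<^sup>2 / 2 + (1 - t)\<^sup>2 * k * (nc y)\<^sup>2 / (2 * \<mu>)"
    using ns_bound mu_pos by (simp add: divide_right_mono)
  also have "\<dots> = (k * k + \<mu> * k) / s\<^sup>2 * (nc y)\<^sup>2 / 2"
    unfolding t using s mu_pos by (simp add: t_def field_simps power2_eq_square)
  also have "k * k + \<mu> * k = k * s"
    by (simp add: s_def algebra_simps)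
  also have "k * s / s\<^sup>2 = k / (k + \<mu>)"
    using s by (simp add: s_def power2_eq_square)
  also have "k / (k + \<mu>) = upper_factor"
    using k by (simp add: upper_factor_def k_def field_simps)
  finally show ?thesis
    by simp
qed

lemma envelope_lower_bound: "lower_factor * (nc y)\<^sup>2 \<le> 2 * envelope y"
proof -
  define l where "l = lcs\<^sup>2"
  define a where "a = nc (prox y)"
  define b where "b = nc (y - prox y)"
  have l: "0 < l"
    using lcs_pos by (simp add: l_def)
  have "nc y \<le> a + b"
    using nc.triangle[of "prox y" "y - prox y"] by (simp add: a_def b_def)
  then have "lower_factor * (nc y)\<^sup>2 \<le> lower_factor * (a + b)\<^sup>2"
    using lower_factor_pos by (intro mult_left_mono power_mono) auto
  also have "\<dots> \<le> a\<^sup>2 + l * b\<^sup>2 / \<mu>"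
  proof -
    have "l * \<mu> * (a + b)\<^sup>2 \<le> (l + \<mu>) * (\<mu> * a\<^sup>2 + l * b\<^sup>2)"
      using zero_le_power2[of "\<mu> * a - l * b"] by (simp add: power2_eq_square algebra_simps)
    then show ?thesis
      using l mu_pos by (simp add: lower_factor_def l_def[symmetric] field_simps)
  qed
  also have "\<dots> \<le> a\<^sup>2 + (ns (y - prox y))\<^sup>2 / \<mu>"
  proof -
    have "(lcs * b)\<^sup>2 \<le> (ns (y - prox y))\<^sup>2"
      using ns_ge_nc lcs_pos by (intro power_mono) (auto simp: b_def)
    then show ?thesis
      using mu_pos by (simp add: l_def power_mult_distrib divide_right_mono)
  qed
  also have "\<dots> = 2 * envelope y"
    using envelope_objective_prox[of y] by (simp add: envelope_objective_def a_def)
  finally show ?thesis .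
qed

lemma envelope_le_power2: "envelope y \<le> (nc y)\<^sup>2"
  using envelope_upper_bound[of y] envelope_nonneg[of y]
    mult_right_mono[OF upper_factor_le_1 zero_le_power2[of "nc y"]] by linarith

lemma envelope_subgradient: "envelope y + envelope_grad y h \<le> envelope (y + h)"
  by (rule ns.subgradient_of_convex_upper_expansion[OF convex_on_envelope linear_envelope_grad
        envelope_upper_expansion])

lemma envelope_grad_self: "envelope_grad y y = 2 * envelope y"
  using homogeneous_subgradient_self[of envelope "envelope_grad y"]
  by (simp add: envelope_scaleR linear_envelope_grad envelope_subgradient)

lemma envelope_grad_le_sqrt: "envelope_grad y z \<le> sqrt (2 * envelope y) * sqrt (2 * envelope z)"
  using homogeneous_subgradient_le_sqrt[of envelope "envelope_grad y"]
  by (simp add: envelope_scaleR linear_envelope_grad envelope_subgradient envelope_nonneg)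

lemma abs_envelope_grad_le: "\<bar>envelope_grad y h\<bar> \<le> (nc y)\<^sup>2 + (nc h)\<^sup>2"
proof -
  have "envelope (y + v) \<le> (nc y)\<^sup>2 + (nc v)\<^sup>2" for v
    using envelope_upper_bound[of "y + v"] nc.power2_triangle[of y v]
      mult_right_mono[OF upper_factor_le_1 zero_le_power2[of "nc (y + v)"]]
    by linarith
  from this[of h] this[of "- h"] envelope_subgradient[of y h] envelope_subgradient[of y "- h"]
  show ?thesis
    using envelope_nonneg[of y] by (simp add: linear_neg[OF linear_envelope_grad] abs_le_iff)
qed

lemma borel_measurable_envelope_grad: "(\<lambda>y. envelope_grad y h) \<in> borel_measurable borel"
  by (rule ns.borel_measurable_gradient[OF borel_measurable_envelope linear_envelope_grad
        envelope_subgradient envelope_upper_expansion])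

end

locale sa_setting =
  moreau_envelope nc ns L \<mu> lcs ucs + prob_space M + ne: norm_function ne
  for nc ns ne :: "real^'n \<Rightarrow> real" and L \<mu> lcs ucs :: real and M :: "'a measure" +
  fixes H :: "real^'n \<Rightarrow> real^'n" and \<gamma> :: real and xs x0 :: "real^'n"
    and w :: "nat \<Rightarrow> 'a \<Rightarrow> real^'n" and A B \<epsilon> les ues :: real
    and X :: "nat \<Rightarrow> 'a \<Rightarrow> real^'n" and F :: "nat \<Rightarrow> 'a measure"
    and \<alpha>1 \<alpha>2 \<alpha>3 :: real
  assumes X_def: "X = SA_iter H (\<lambda>_. \<epsilon>) x0 w" and F_def: "F = SA_filt M X w"
    and \<alpha>1_def: "\<alpha>1 = (1 + \<mu> / lcs\<^sup>2) / (1 + \<mu> / ucs\<^sup>2)"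
    and \<alpha>2_def: "\<alpha>2 = 1 - \<gamma> * sqrt \<alpha>1"
    and \<alpha>3_def: "\<alpha>3 = 4 * ucs\<^sup>2 * ues\<^sup>2 * (B + 2) * L * (lcs\<^sup>2 + \<mu>) / (\<mu> * lcs\<^sup>2 * les\<^sup>2)"
    and gamma: "0 < \<gamma>" "\<gamma> < 1"
    and contraction: "\<And>u v. nc (H u - H v) \<le> \<gamma> * nc (u - v)"
    and fixpoint: "H xs = xs"
    and w_measurable: "\<And>k. w k \<in> borel_measurable M"
    and w_mean: "\<And>k i. AE \<omega> in M. real_cond_exp M (F k) (\<lambda>\<omega>. w k \<omega> $ i) \<omega> = 0"
    and w_var: "\<And>k. AE \<omega> in M. nn_cond_exp M (F k) (\<lambda>\<omega>. ennreal ((ne (w k \<omega>))\<^sup>2)) \<omega>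
                   \<le> ennreal (A + B * (ne (X k \<omega>))\<^sup>2)"
    and A_pos: "0 < A" and B_pos: "0 < B"
    and lcs_le_1: "lcs \<le> 1" and les: "0 < les" "les \<le> 1" and ues_ge_1: "1 \<le> ues"
    and ns_ge_ne: "\<And>u. les * ne u \<le> ns u" and ns_le_ne: "\<And>u. ns u \<le> ues * ne u"
    and \<alpha>2_pos: "0 < \<alpha>2"
    and eps: "0 < \<epsilon>" "\<epsilon> \<le> \<alpha>2 / \<alpha>3"
begin

definition K :: real where "K = L / (2 * \<mu>)"

definition r :: real where "r = ucs\<^sup>2 / les\<^sup>2"

definition noise_const :: real where
  "noise_const = 2 * K * ues\<^sup>2 * r * (A + 2 * B * (nc xs)\<^sup>2)"

lemma K_nonneg: "0 \<le> K"
  using smoothness_const_ge_1 mu_pos by (simp add: K_def)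

lemma r_ge: "1 \<le> r" "ucs\<^sup>2 \<le> r"
proof -
  have "les\<^sup>2 \<le> 1" "0 < les\<^sup>2" "1 \<le> ucs\<^sup>2"
    using les ucs_ge_1 by (simp_all add: power_le_one one_le_power)
  then show "1 \<le> r" "ucs\<^sup>2 \<le> r"
    by (simp_all add: r_def le_divide_eq mult_left_le)
qed

lemma noise_const_nonneg: "0 \<le> noise_const"
  unfolding noise_const_def using K_nonneg r_ge(1) A_pos B_pos
  by (intro mult_nonneg_nonneg add_nonneg_nonneg) auto

lemma \<alpha>1_eq: "\<alpha>1 = upper_factor / lower_factor"
  by (simp add: \<alpha>1_def upper_factor_def lower_factor_def)

lemma \<alpha>3_eq: "\<alpha>3 = 2 * (B + 2) * (4 * K * ues\<^sup>2 * r / lower_factor)"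
  using mu_pos lcs_pos les
  by (simp add: \<alpha>3_def K_def r_def lower_factor_def field_simps add_pos_pos power2_eq_square)

lemma \<alpha>3_div_eq: "\<alpha>3 / (2 * (B + 2)) = 4 * K * ues\<^sup>2 * r / lower_factor"
proof -
  have "2 * (B + 2) \<noteq> 0"
    using B_pos by simp
  then show ?thesis
    unfolding \<alpha>3_eq by (rule nonzero_mult_div_cancel_left)
qed

lemma \<alpha>3_ge_1: "1 \<le> \<alpha>3"
proof -
  have "1 \<le> 4 * ucs\<^sup>2 * ues\<^sup>2 * (B + 2) * L"
    using ucs_ge_1 ues_ge_1 B_pos smoothness_const_ge_1
    by (intro mult_ge1_I) (auto simp: one_le_power)
  moreover have "1 \<le> (lcs\<^sup>2 + \<mu>) / \<mu>" "1 \<le> 1 / (lcs\<^sup>2 * les\<^sup>2)"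
    using mu_pos lcs_pos lcs_le_1 les by (simp_all add: power_le_one mult_le_one)
  ultimately have "1 \<le> (4 * ucs\<^sup>2 * ues\<^sup>2 * (B + 2) * L) * ((lcs\<^sup>2 + \<mu>) / \<mu>) * (1 / (lcs\<^sup>2 * les\<^sup>2))"
    by (metis mult_ge1_I)
  then show ?thesis
    by (simp add: \<alpha>3_def field_simps)
qed

lemma step_size:
  shows \<alpha>3_eps_le: "\<alpha>3 * \<epsilon> \<le> \<alpha>2" and \<alpha>2_eps_le_1: "\<alpha>2 * \<epsilon> \<le> 1"
proof -
  show "\<alpha>3 * \<epsilon> \<le> \<alpha>2"
    using eps(2) \<alpha>3_ge_1 by (simp add: le_divide_eq mult.commute)
  have "0 < \<alpha>1"
    unfolding \<alpha>1_def using mu_pos by (intro divide_pos_pos add_pos_nonneg) auto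
  then have "\<alpha>2 \<le> 1"
    using gamma by (simp add: \<alpha>2_def)
  then show "\<alpha>2 * \<epsilon> \<le> 1"
    using \<open>\<alpha>3 * \<epsilon> \<le> \<alpha>2\<close> \<alpha>3_ge_1 eps(1) mult_right_mono[of 1 \<alpha>3 \<epsilon>]
      mult_right_mono[of \<alpha>2 1 \<epsilon>] by linarith
qed

lemma borel_measurable_H [measurable]: "H \<in> borel_measurable borel"
  using nc.lipschitz_continuous[OF _ contraction] gamma
  by (intro borel_measurable_continuous_onI) simp

lemmas [measurable] = nc.borel_measurable ns.borel_measurable ne.borel_measurable
  borel_measurable_envelope w_measurable

lemma X_0: "X 0 = (\<lambda>_. x0)"
  by (simp add: X_def)

lemma X_Suc: "X (Suc k) = (\<lambda>\<omega>. X k \<omega> + \<epsilon> *\<^sub>R (H (X k \<omega>) - X k \<omega> + w k \<omega>))"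
  by (simp add: X_def)

lemma X_measurable [measurable]: "X k \<in> borel_measurable M"
proof (induction k)
  case (Suc k)
  note [measurable] = Suc.IH
  show ?case
    unfolding X_Suc by measurable
qed (simp add: X_0)

lemma F_generated:
  obtains \<G> where "F k = sigma (space M) \<G>" "\<G> \<subseteq> sets M"
    "\<And>S. S \<in> sets borel \<Longrightarrow> X k -` S \<inter> space M \<in> \<G>"
proof
  let ?\<G> = "(\<Union>j\<in>{..k}. {X j -` S \<inter> space M | S. S \<in> sets borel})
    \<union> (\<Union>j\<in>{..<k}. {w j -` S \<inter> space M | S. S \<in> sets borel})"
  show "F k = sigma (space M) ?\<G>"
    by (simp add: F_def SA_filt_def)
  show "?\<G> \<subseteq> sets M"
    by (auto intro!: measurable_sets[OF X_measurable] measurable_sets[OF w_measurable])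
  show "X k -` S \<inter> space M \<in> ?\<G>" if "S \<in> sets borel" for S
    using that by blast
qed

lemma subalgebra_F: "subalgebra M (F k)"
proof -
  obtain \<G> where \<G>: "F k = sigma (space M) \<G>" "\<G> \<subseteq> sets M"
    using F_generated[of k] by blast
  then have "\<G> \<subseteq> Pow (space M)"
    using sets.sets_into_space by blast
  then show ?thesis
    unfolding subalgebra_def \<G>(1)
    using sets.sigma_sets_subset[OF \<G>(2)] by (simp add: space_measure_of sets_measure_of)
qed

lemma sigma_finite_subalgebra_F: "sigma_finite_subalgebra M (F k)"
  by (intro finite_measure_subalgebra_is_sigma_finite finite_measure_subalgebra.intro
      finite_measure_subalgebra_axioms.intro subalgebra_F finite_measureI) simp

lemma X_measurable_F: "X k \<in> borel_measurable (F k)"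
proof -
  obtain \<G> where \<G>: "F k = sigma (space M) \<G>" "\<G> \<subseteq> sets M"
      "\<And>S. S \<in> sets borel \<Longrightarrow> X k -` S \<inter> space M \<in> \<G>"
    using F_generated[of k] by blast
  have "\<G> \<subseteq> Pow (space M)"
    using \<G>(2) sets.sets_into_space by blast
  then show ?thesis
    unfolding \<G>(1) by (intro measurableI) (auto simp: space_measure_of sets_measure_of \<G>(3))
qed

lemma error_Suc:
  "X (Suc k) \<omega> - xs = (X k \<omega> - xs) + \<epsilon> *\<^sub>R ((H (X k \<omega>) - H xs) - (X k \<omega> - xs) + w k \<omega>)"
  by (simp add: X_Suc fixpoint algebra_simps)

lemma nc_drift_le: "nc ((H x - H xs) - (x - xs)) \<le> 2 * nc (x - xs)"
proof -
  have "nc ((H x - H xs) - (x - xs)) \<le> nc (H x - H xs) + nc (- (x - xs))"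
    using nc.triangle[of "H x - H xs" "- (x - xs)"] by (simp only: diff_conv_add_uminus)
  also have "\<dots> \<le> 2 * nc (x - xs)"
    using contraction[of x xs] gamma mult_right_mono[of \<gamma> 1 "nc (x - xs)"] nc.minus_commute[of xs x]
    by simp
  finally show ?thesis .
qed

lemma nc_le_ne: "nc v \<le> ues / lcs * ne v"
  using ns_ge_nc[of v] ns_le_ne[of v] lcs_pos by (simp add: field_simps)

lemma ne_power2_le: "(ne v)\<^sup>2 \<le> r * (nc v)\<^sup>2"
proof -
  have "ne v \<le> ucs / les * nc v"
    using ns_ge_ne[of v] ns_le_nc[of v] les by (simp add: field_simps)
  then have "(ne v)\<^sup>2 \<le> (ucs / les * nc v)\<^sup>2"
    by (rule power_mono) simp
  then show ?thesis
    by (simp add: r_def power_mult_distrib power_divide)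
qed

lemma envelope_contraction: "2 * envelope (H x - H xs) \<le> \<gamma>\<^sup>2 * \<alpha>1 * (2 * envelope (x - xs))"
proof -
  have "2 * envelope (H x - H xs) \<le> upper_factor * (nc (H x - H xs))\<^sup>2"
    by (rule envelope_upper_bound)
  also have "\<dots> \<le> upper_factor * (\<gamma>\<^sup>2 * (nc (x - xs))\<^sup>2)"
    using power_mono[OF contraction[of x xs] nc.nonneg, of 2] upper_factor_pos
    by (intro mult_left_mono) (auto simp: power_mult_distrib)
  also have "\<dots> \<le> upper_factor * (\<gamma>\<^sup>2 * (2 * envelope (x - xs) / lower_factor))"
    using envelope_lower_bound[of "x - xs"] lower_factor_pos upper_factor_pos
    by (intro mult_left_mono) (auto simp: field_simps)
  also have "\<dots> = \<gamma>\<^sup>2 * \<alpha>1 * (2 * envelope (x - xs))"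
    by (simp add: \<alpha>1_eq)
  finally show ?thesis .
qed

lemma envelope_grad_contraction:
  "envelope_grad (x - xs) (H x - H xs) - envelope_grad (x - xs) (x - xs) \<le> - 2 * \<alpha>2 * envelope (x - xs)"
proof -
  define y where "y = x - xs"
  have "sqrt (2 * envelope (H x - H xs)) \<le> sqrt (\<gamma>\<^sup>2 * \<alpha>1 * (2 * envelope y))"
    unfolding y_def by (rule real_sqrt_le_mono[OF envelope_contraction])
  also have "\<dots> = \<gamma> * sqrt \<alpha>1 * sqrt (2 * envelope y)"
    using gamma by (simp add: real_sqrt_mult)
  finally have "envelope_grad y (H x - H xs) \<le> sqrt (2 * envelope y) * (\<gamma> * sqrt \<alpha>1 * sqrt (2 * envelope y))"
    using envelope_grad_le_sqrt[of y "H x - H xs"] mult_left_mono[OF _ real_sqrt_ge_zero]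
      envelope_nonneg[of y] by (meson order_trans zero_le_mult_iff zero_le_numeral)
  also have "\<dots> = \<gamma> * sqrt \<alpha>1 * (2 * envelope y)"
    using envelope_nonneg[of y] by simp
  finally show ?thesis
    using envelope_grad_self[of y] by (simp add: y_def \<alpha>2_def algebra_simps)
qed

lemma ns_power2_increment_le:
  "(ns ((H x - H xs) - (x - xs) + v))\<^sup>2 \<le> 8 * ucs\<^sup>2 * (nc (x - xs))\<^sup>2 + 2 * ues\<^sup>2 * (ne v)\<^sup>2"
proof -
  define d where "d = (H x - H xs) - (x - xs)"
  have "ns d \<le> ucs * (2 * nc (x - xs))"
    using ns_le_nc[of d] nc_drift_le[of x] ucs_ge_1 mult_left_mono[of _ _ ucs]
    unfolding d_def by (meson order_trans zero_le_one)
  from power_mono[OF this ns.nonneg, of 2]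
  have "(ns d)\<^sup>2 \<le> 4 * ucs\<^sup>2 * (nc (x - xs))\<^sup>2"
    by (simp add: power_mult_distrib)
  moreover have "(ns v)\<^sup>2 \<le> ues\<^sup>2 * (ne v)\<^sup>2"
    using power_mono[OF ns_le_ne[of v] ns.nonneg, of 2] by (simp add: power_mult_distrib)
  ultimately show ?thesis
    using ns.power2_triangle[of d v] unfolding d_def by linarith
qed

lemma envelope_step:
  "envelope ((x - xs) + \<epsilon> *\<^sub>R ((H x - H xs) - (x - xs) + v))
     \<le> (1 - 2 * \<alpha>2 * \<epsilon>) * envelope (x - xs) + \<epsilon> * envelope_grad (x - xs) v
       + K * \<epsilon>\<^sup>2 * (8 * ucs\<^sup>2 * (nc (x - xs))\<^sup>2 + 2 * ues\<^sup>2 * (ne v)\<^sup>2)"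
proof -
  define y where "y = x - xs"
  define d where "d = (H x - H xs) - y"
  have lin: "linear (envelope_grad y)"
    by (rule linear_envelope_grad)
  have "envelope_grad y (\<epsilon> *\<^sub>R (d + v))
      = \<epsilon> * (envelope_grad y (H x - H xs) - envelope_grad y y) + \<epsilon> * envelope_grad y v"
    by (simp add: d_def linear_scale[OF lin] linear_add[OF lin] linear_diff[OF lin] algebra_simps)
  also have "\<dots> \<le> \<epsilon> * (- 2 * \<alpha>2 * envelope y) + \<epsilon> * envelope_grad y v"
    using mult_left_mono[OF envelope_grad_contraction[of x] less_imp_le[OF eps(1)]]
    unfolding y_def by simp
  finally have drift: "envelope_grad y (\<epsilon> *\<^sub>R (d + v))
      \<le> \<epsilon> * (- 2 * \<alpha>2 * envelope y) + \<epsilon> * envelope_grad y v" .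
  have noise: "K * (ns (\<epsilon> *\<^sub>R (d + v)))\<^sup>2
      \<le> K * (\<epsilon>\<^sup>2 * (8 * ucs\<^sup>2 * (nc y)\<^sup>2 + 2 * ues\<^sup>2 * (ne v)\<^sup>2))"
    using ns_power2_increment_le[of x v] K_nonneg eps(1)
    by (intro mult_left_mono) (simp_all add: ns.power2_scaleR d_def y_def)
  have "envelope (y + \<epsilon> *\<^sub>R (d + v))
      \<le> envelope y + envelope_grad y (\<epsilon> *\<^sub>R (d + v)) + K * (ns (\<epsilon> *\<^sub>R (d + v)))\<^sup>2"
    unfolding K_def by (rule envelope_upper_expansion)
  with drift noise show ?thesis
    by (simp add: y_def d_def algebra_simps)
qed

lemma nc_error_step_power2_le:
  "(nc ((x - xs) + \<epsilon> *\<^sub>R ((H x - H xs) - (x - xs) + v)))\<^sup>2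
     \<le> 2 * (1 + 2 * \<epsilon>)\<^sup>2 * (nc (x - xs))\<^sup>2 + 2 * (\<epsilon> * (ues / lcs))\<^sup>2 * (ne v)\<^sup>2"
proof -
  define y where "y = x - xs"
  define d where "d = (H x - H xs) - y"
  have "nc (d + v) \<le> 2 * nc y + ues / lcs * ne v"
    using nc.triangle[of d v] nc_drift_le[of x] nc_le_ne[of v] unfolding d_def y_def by linarith
  then have "\<epsilon> * nc (d + v) \<le> \<epsilon> * (2 * nc y + ues / lcs * ne v)"
    using eps(1) by (simp add: mult_left_mono)
  moreover have "nc (\<epsilon> *\<^sub>R (d + v)) = \<epsilon> * nc (d + v)"
    using eps(1) by (simp only: nc.scaleR abs_of_pos)
  ultimately have "nc (y + \<epsilon> *\<^sub>R (d + v)) \<le> (1 + 2 * \<epsilon>) * nc y + \<epsilon> * (ues / lcs) * ne v"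
    using nc.triangle[of y "\<epsilon> *\<^sub>R (d + v)"] by (simp add: algebra_simps)
  from power_mono[OF this nc.nonneg, of 2]
  have "(nc (y + \<epsilon> *\<^sub>R (d + v)))\<^sup>2 \<le> ((1 + 2 * \<epsilon>) * nc y + \<epsilon> * (ues / lcs) * ne v)\<^sup>2" .
  also have "\<dots> \<le> 2 * ((1 + 2 * \<epsilon>) * nc y)\<^sup>2 + 2 * (\<epsilon> * (ues / lcs) * ne v)\<^sup>2"
    using sum_squares_bound[of "(1 + 2 * \<epsilon>) * nc y" "\<epsilon> * (ues / lcs) * ne v"]
    by (simp add: power2_sum)
  also have "\<dots> = 2 * (1 + 2 * \<epsilon>)\<^sup>2 * (nc y)\<^sup>2 + 2 * (\<epsilon> * (ues / lcs))\<^sup>2 * (ne v)\<^sup>2"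
    by (simp only: power_mult_distrib mult.assoc)
  finally show ?thesis
    by (simp only: y_def d_def)
qed

lemma ne_power2_le_shifted: "(ne v)\<^sup>2 \<le> 2 * r * (nc (v - xs))\<^sup>2 + 2 * r * (nc xs)\<^sup>2"
  using ne.power2_triangle[of "v - xs" xs] ne_power2_le[of "v - xs"] ne_power2_le[of xs] by simp

context
  fixes k :: nat
  assumes integrable_error: "integrable M (\<lambda>\<omega>. (nc (X k \<omega> - xs))\<^sup>2)"
begin

lemma integral_ne_X_le:
  "(\<integral>\<omega>. (ne (X k \<omega>))\<^sup>2 \<partial>M) \<le> 2 * r * ((\<integral>\<omega>. (nc (X k \<omega> - xs))\<^sup>2 \<partial>M) + (nc xs)\<^sup>2)"
  and integrable_ne_X: "integrable M (\<lambda>\<omega>. (ne (X k \<omega>))\<^sup>2)"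
proof -
  have bound: "integrable M (\<lambda>\<omega>. 2 * r * (nc (X k \<omega> - xs))\<^sup>2 + 2 * r * (nc xs)\<^sup>2)"
    by (intro Bochner_Integration.integrable_add integrable_mult_right integrable_error integrable_const)
  show int: "integrable M (\<lambda>\<omega>. (ne (X k \<omega>))\<^sup>2)"
  proof (rule integrable_if_abs_le[OF bound])
    show "\<bar>(ne (X k \<omega>))\<^sup>2\<bar> \<le> 2 * r * (nc (X k \<omega> - xs))\<^sup>2 + 2 * r * (nc xs)\<^sup>2" for \<omega>
      using ne_power2_le_shifted[of "X k \<omega>"] by simp
  qed measurable
  have "(\<integral>\<omega>. (ne (X k \<omega>))\<^sup>2 \<partial>M) \<le> (\<integral>\<omega>. 2 * r * (nc (X k \<omega> - xs))\<^sup>2 + 2 * r * (nc xs)\<^sup>2 \<partial>M)"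
    by (rule integral_mono[OF int bound ne_power2_le_shifted])
  also have "\<dots> = 2 * r * ((\<integral>\<omega>. (nc (X k \<omega> - xs))\<^sup>2 \<partial>M) + (nc xs)\<^sup>2)"
    using integrable_error by (simp add: prob_space distrib_left)
  finally show "(\<integral>\<omega>. (ne (X k \<omega>))\<^sup>2 \<partial>M) \<le> 2 * r * ((\<integral>\<omega>. (nc (X k \<omega> - xs))\<^sup>2 \<partial>M) + (nc xs)\<^sup>2)" .
qed

text \<open>The conditional variance bound on the noise, integrated out by the tower property.\<close>

lemma noise_moment:
  shows integrable_noise_power2: "integrable M (\<lambda>\<omega>. (ne (w k \<omega>))\<^sup>2)"
    and integral_noise_power2_le: "(\<integral>\<omega>. (ne (w k \<omega>))\<^sup>2 \<partial>M) \<le> A + B * (\<integral>\<omega>. (ne (X k \<omega>))\<^sup>2 \<partial>M)"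
proof -
  have int: "integrable M (\<lambda>\<omega>. A + B * (ne (X k \<omega>))\<^sup>2)"
    by (intro Bochner_Integration.integrable_add integrable_mult_right integrable_ne_X integrable_const)
  have "(\<integral>\<^sup>+\<omega>. ennreal ((ne (w k \<omega>))\<^sup>2) \<partial>M)
      = (\<integral>\<^sup>+\<omega>. 1 * nn_cond_exp M (F k) (\<lambda>\<omega>. ennreal ((ne (w k \<omega>))\<^sup>2)) \<omega> \<partial>M)"
    using sigma_finite_subalgebra.nn_cond_exp_intg[OF sigma_finite_subalgebra_F, of "\<lambda>_. 1"] by simp
  also have "\<dots> \<le> (\<integral>\<^sup>+\<omega>. ennreal (A + B * (ne (X k \<omega>))\<^sup>2) \<partial>M)"
    using w_var[of k] by (intro nn_integral_mono_AE) auto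
  also have "\<dots> = ennreal (\<integral>\<omega>. A + B * (ne (X k \<omega>))\<^sup>2 \<partial>M)"
    using A_pos B_pos by (intro nn_integral_eq_integral[OF int]) auto
  also have "(\<integral>\<omega>. A + B * (ne (X k \<omega>))\<^sup>2 \<partial>M) = A + B * (\<integral>\<omega>. (ne (X k \<omega>))\<^sup>2 \<partial>M)"
    using integrable_ne_X by (simp add: prob_space)
  finally have le: "(\<integral>\<^sup>+\<omega>. ennreal ((ne (w k \<omega>))\<^sup>2) \<partial>M) \<le> ennreal (A + B * (\<integral>\<omega>. (ne (X k \<omega>))\<^sup>2 \<partial>M))" .
  show int_w: "integrable M (\<lambda>\<omega>. (ne (w k \<omega>))\<^sup>2)"
    using le by (intro integrableI_nonneg) (auto simp: top.not_eq_extremum intro: le_less_trans)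
  have "0 \<le> A + B * (\<integral>\<omega>. (ne (X k \<omega>))\<^sup>2 \<partial>M)"
    using A_pos B_pos by simp
  then show "(\<integral>\<omega>. (ne (w k \<omega>))\<^sup>2 \<partial>M) \<le> A + B * (\<integral>\<omega>. (ne (X k \<omega>))\<^sup>2 \<partial>M)"
    using le by (simp add: nn_integral_eq_integral[OF int_w])
qed

end

lemma integrable_error_power2: "integrable M (\<lambda>\<omega>. (nc (X k \<omega> - xs))\<^sup>2)"
proof (induction k)
  case 0
  show ?case by (simp add: X_0)
next
  case (Suc k)
  have "integrable M (\<lambda>\<omega>. 2 * (1 + 2 * \<epsilon>)\<^sup>2 * (nc (X k \<omega> - xs))\<^sup>2
      + 2 * (\<epsilon> * (ues / lcs))\<^sup>2 * (ne (w k \<omega>))\<^sup>2)"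
    by (intro Bochner_Integration.integrable_add integrable_mult_right Suc.IH
        integrable_noise_power2[OF Suc.IH])
  then show ?case
  proof (rule integrable_if_abs_le)
    show "\<bar>(nc (X (Suc k) \<omega> - xs))\<^sup>2\<bar> \<le> 2 * (1 + 2 * \<epsilon>)\<^sup>2 * (nc (X k \<omega> - xs))\<^sup>2
        + 2 * (\<epsilon> * (ues / lcs))\<^sup>2 * (ne (w k \<omega>))\<^sup>2" for \<omega>
      unfolding error_Suc using nc_error_step_power2_le by simp
  qed measurable
qed

lemma abs_envelope_grad_axis_le:
  assumes "0 < c" "\<And>x. c * norm x \<le> ne x"
  shows "\<bar>envelope_grad y (axis i 1) * v $ i\<bar> \<le> (nc y)\<^sup>2 + (nc (axis i 1))\<^sup>2 / c\<^sup>2 * (ne v)\<^sup>2"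
proof -
  have "c * \<bar>v $ i\<bar> \<le> ne v"
    using mult_left_mono[OF component_le_norm_cart[of v i] less_imp_le[OF assms(1)]] assms(2)[of v]
    by linarith
  then have "(v $ i)\<^sup>2 \<le> (ne v / c)\<^sup>2"
    using assms(1) by (intro power2_le_iff_abs_le[THEN iffD2]) (simp_all add: pos_le_divide_eq mult.commute)
  from mult_right_mono[OF this zero_le_power2[of "nc (axis i 1)"]]
  have component: "(v $ i)\<^sup>2 * (nc (axis i 1))\<^sup>2 \<le> (nc (axis i 1))\<^sup>2 / c\<^sup>2 * (ne v)\<^sup>2"
    by (simp add: power_divide mult.commute)
  have "\<bar>envelope_grad y (axis i 1) * v $ i\<bar> = \<bar>envelope_grad y ((v $ i) *\<^sub>R axis i 1)\<bar>"
    by (simp add: linear_scale[OF linear_envelope_grad] mult.commute)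
  also have "\<dots> \<le> (nc y)\<^sup>2 + (v $ i)\<^sup>2 * (nc (axis i 1))\<^sup>2"
    using abs_envelope_grad_le[of y "(v $ i) *\<^sub>R axis i 1"] by (simp only: nc.power2_scaleR)
  finally show ?thesis
    using component by simp
qed

text \<open>The cross term vanishes in mean: each coordinate of the noise has zero conditional mean, and
  its coefficient in the linear functional envelope_grad (X k - xs) is F_k-measurable.\<close>

lemma cross_term:
  shows integrable_cross_term: "integrable M (\<lambda>\<omega>. envelope_grad (X k \<omega> - xs) (w k \<omega>))"
    and integral_cross_term: "(\<integral>\<omega>. envelope_grad (X k \<omega> - xs) (w k \<omega>) \<partial>M) = 0"
proof -
  obtain c where c: "0 < c" "\<And>x. c * norm x \<le> ne x"
    using ne.ge_norm by blast
  define f where "f i \<omega> = envelope_grad (X k \<omega> - xs) (axis i 1)" for i \<omega>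
  have f_F [measurable]: "f i \<in> borel_measurable (F k)" for i
    using measurable_compose[OF _ borel_measurable_envelope_grad, of "\<lambda>\<omega>. X k \<omega> - xs"]
      X_measurable_F[of k] unfolding f_def by measurable
  have f_M [measurable]: "f i \<in> borel_measurable M" for i
    by (rule measurable_from_subalg[OF subalgebra_F f_F])
  have w_i [measurable]: "(\<lambda>\<omega>. w k \<omega> $ i) \<in> borel_measurable M" for i
    using borel_measurable_continuous_onI[OF linear_continuous_on[OF bounded_linear_vec_nth[of i]]]
    by measurable
  have int: "integrable M (\<lambda>\<omega>. f i \<omega> * w k \<omega> $ i)" for i
  proof (rule integrable_if_abs_le)
    show "integrable M (\<lambda>\<omega>. (nc (X k \<omega> - xs))\<^sup>2 + (nc (axis i 1))\<^sup>2 / c\<^sup>2 * (ne (w k \<omega>))\<^sup>2)"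
      by (intro Bochner_Integration.integrable_add integrable_mult_right integrable_error_power2
          integrable_noise_power2)
    show "\<bar>f i \<omega> * w k \<omega> $ i\<bar> \<le> (nc (X k \<omega> - xs))\<^sup>2 + (nc (axis i 1))\<^sup>2 / c\<^sup>2 * (ne (w k \<omega>))\<^sup>2" for \<omega>
      unfolding f_def by (rule abs_envelope_grad_axis_le[OF c])
  qed measurable
  have zero: "(\<integral>\<omega>. f i \<omega> * w k \<omega> $ i \<partial>M) = 0" for i
  proof -
    have "(\<integral>\<omega>. f i \<omega> * w k \<omega> $ i \<partial>M) = (\<integral>\<omega>. f i \<omega> * real_cond_exp M (F k) (\<lambda>\<omega>. w k \<omega> $ i) \<omega> \<partial>M)"
      by (rule sigma_finite_subalgebra.real_cond_exp_intg(2)[OF sigma_finite_subalgebra_F int f_F w_i,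
            symmetric])
    also have "\<dots> = 0"
      using w_mean[of k i] by (intro integral_eq_zero_AE) auto
    finally show ?thesis .
  qed
  have expand: "envelope_grad (X k \<omega> - xs) (w k \<omega>) = (\<Sum>i\<in>UNIV. f i \<omega> * w k \<omega> $ i)" for \<omega>
    unfolding f_def by (subst linear_eq_sum_axis[OF linear_envelope_grad]) (simp add: mult.commute)
  show "integrable M (\<lambda>\<omega>. envelope_grad (X k \<omega> - xs) (w k \<omega>))"
    unfolding expand by (intro Bochner_Integration.integrable_sum int)
  show "(\<integral>\<omega>. envelope_grad (X k \<omega> - xs) (w k \<omega>) \<partial>M) = 0"
    unfolding expand by (simp add: Bochner_Integration.integral_sum int zero)
qed

lemma integrable_envelope_error: "integrable M (\<lambda>\<omega>. envelope (X k \<omega> - xs))"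
proof (rule integrable_if_abs_le[OF integrable_error_power2])
  show "\<bar>envelope (X k \<omega> - xs)\<bar> \<le> (nc (X k \<omega> - xs))\<^sup>2" for \<omega>
    using envelope_nonneg envelope_le_power2 by simp
qed measurable

lemma expected_envelope_step:
  "(\<integral>\<omega>. envelope (X (Suc k) \<omega> - xs) \<partial>M)
     \<le> (1 - 2 * \<alpha>2 * \<epsilon>) * (\<integral>\<omega>. envelope (X k \<omega> - xs) \<partial>M)
       + K * \<epsilon>\<^sup>2 * (8 * ucs\<^sup>2 * (\<integral>\<omega>. (nc (X k \<omega> - xs))\<^sup>2 \<partial>M)
                 + 2 * ues\<^sup>2 * (\<integral>\<omega>. (ne (w k \<omega>))\<^sup>2 \<partial>M))"
proof -
  define V where "V \<omega> = envelope (X k \<omega> - xs)" for \<omega>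
  define G where "G \<omega> = envelope_grad (X k \<omega> - xs) (w k \<omega>)" for \<omega>
  define Q where "Q \<omega> = 8 * ucs\<^sup>2 * (nc (X k \<omega> - xs))\<^sup>2 + 2 * ues\<^sup>2 * (ne (w k \<omega>))\<^sup>2" for \<omega>
  have int: "integrable M V" "integrable M G" "integrable M Q"
    unfolding V_def G_def Q_def
    by (intro integrable_envelope_error integrable_cross_term Bochner_Integration.integrable_add
        integrable_mult_right integrable_error_power2 integrable_noise_power2)+
  have "envelope (X (Suc k) \<omega> - xs) \<le> (1 - 2 * \<alpha>2 * \<epsilon>) * V \<omega> + \<epsilon> * G \<omega> + K * \<epsilon>\<^sup>2 * Q \<omega>" for \<omega>
    unfolding V_def G_def Q_def error_Suc by (rule envelope_step)
  then have "(\<integral>\<omega>. envelope (X (Suc k) \<omega> - xs) \<partial>M)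
      \<le> (\<integral>\<omega>. (1 - 2 * \<alpha>2 * \<epsilon>) * V \<omega> + \<epsilon> * G \<omega> + K * \<epsilon>\<^sup>2 * Q \<omega> \<partial>M)"
    by (intro integral_mono integrable_envelope_error Bochner_Integration.integrable_add
        integrable_mult_right int)
  also have "\<dots> = (1 - 2 * \<alpha>2 * \<epsilon>) * (\<integral>\<omega>. V \<omega> \<partial>M) + \<epsilon> * (\<integral>\<omega>. G \<omega> \<partial>M)
      + K * \<epsilon>\<^sup>2 * (\<integral>\<omega>. Q \<omega> \<partial>M)"
    using int by simp
  also have "(\<integral>\<omega>. G \<omega> \<partial>M) = 0"
    unfolding G_def by (rule integral_cross_term)
  also have "(\<integral>\<omega>. Q \<omega> \<partial>M) = 8 * ucs\<^sup>2 * (\<integral>\<omega>. (nc (X k \<omega> - xs))\<^sup>2 \<partial>M)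
      + 2 * ues\<^sup>2 * (\<integral>\<omega>. (ne (w k \<omega>))\<^sup>2 \<partial>M)"
    unfolding Q_def using integrable_error_power2 integrable_noise_power2 by simp
  finally show ?thesis
    by (simp add: V_def)
qed

lemma integral_lower_bound:
  "lower_factor * (\<integral>\<omega>. (nc (X k \<omega> - xs))\<^sup>2 \<partial>M) \<le> 2 * (\<integral>\<omega>. envelope (X k \<omega> - xs) \<partial>M)"
proof -
  have "(\<integral>\<omega>. lower_factor * (nc (X k \<omega> - xs))\<^sup>2 \<partial>M) \<le> (\<integral>\<omega>. 2 * envelope (X k \<omega> - xs) \<partial>M)"
    by (intro integral_mono integrable_mult_right integrable_error_power2 integrable_envelope_error
        envelope_lower_bound)
  then show ?thesis
    by simp
qed

lemma second_moments_le:
  "8 * ucs\<^sup>2 * (\<integral>\<omega>. (nc (X k \<omega> - xs))\<^sup>2 \<partial>M) + 2 * ues\<^sup>2 * (\<integral>\<omega>. (ne (w k \<omega>))\<^sup>2 \<partial>M)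
     \<le> 4 * ues\<^sup>2 * r * (B + 2) * (\<integral>\<omega>. (nc (X k \<omega> - xs))\<^sup>2 \<partial>M)
       + 2 * ues\<^sup>2 * r * (A + 2 * B * (nc xs)\<^sup>2)"
proof -
  define q where "q = (\<integral>\<omega>. (nc (X k \<omega> - xs))\<^sup>2 \<partial>M)"
  have "(\<integral>\<omega>. (ne (w k \<omega>))\<^sup>2 \<partial>M) \<le> A + B * (2 * r * (q + (nc xs)\<^sup>2))"
    using integral_noise_power2_le[OF integrable_error_power2, of k]
      mult_left_mono[OF integral_ne_X_le[OF integrable_error_power2, of k] less_imp_le[OF B_pos]]
    unfolding q_def by linarith
  from mult_left_mono[OF this, of "2 * ues\<^sup>2"]
  have "8 * ucs\<^sup>2 * q + 2 * ues\<^sup>2 * (\<integral>\<omega>. (ne (w k \<omega>))\<^sup>2 \<partial>M)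
      \<le> 8 * ucs\<^sup>2 * q + 2 * ues\<^sup>2 * (A + 2 * B * r * (q + (nc xs)\<^sup>2))"
    by (simp add: algebra_simps)
  also have "\<dots> \<le> 4 * ues\<^sup>2 * r * (B + 2) * q + 2 * ues\<^sup>2 * r * (A + 2 * B * (nc xs)\<^sup>2)"
  proof -
    have "1 \<le> ues\<^sup>2"
      using ues_ge_1 by (simp add: one_le_power)
    then have "ucs\<^sup>2 \<le> ues\<^sup>2 * r"
      using r_ge mult_mono[of 1 "ues\<^sup>2" "ucs\<^sup>2" r] by simp
    then have "8 * ucs\<^sup>2 * q \<le> 8 * (ues\<^sup>2 * r) * q"
      by (simp add: q_def mult_right_mono)
    moreover have "2 * ues\<^sup>2 * A \<le> 2 * ues\<^sup>2 * A * r"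
      using mult_left_mono[OF r_ge(1), of "2 * ues\<^sup>2 * A"] A_pos by simp
    ultimately show ?thesis
      by (simp add: algebra_simps)
  qed
  finally show ?thesis
    by (simp add: q_def)
qed

text \<open>By the choice of the step size, the part of the noise proportional to the mean square error
  costs at most half of the contraction.\<close>

lemma expected_envelope_recursion:
  "(\<integral>\<omega>. envelope (X (Suc k) \<omega> - xs) \<partial>M)
     \<le> (1 - \<alpha>2 * \<epsilon>) * (\<integral>\<omega>. envelope (X k \<omega> - xs) \<partial>M) + \<epsilon>\<^sup>2 * noise_const"
proof -
  define a where "a = (\<integral>\<omega>. envelope (X k \<omega> - xs) \<partial>M)"
  define q where "q = (\<integral>\<omega>. (nc (X k \<omega> - xs))\<^sup>2 \<partial>M)"
  define W where "W = (\<integral>\<omega>. (ne (w k \<omega>))\<^sup>2 \<partial>M)"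
  have "K * \<epsilon>\<^sup>2 * (8 * ucs\<^sup>2 * q + 2 * ues\<^sup>2 * W)
      \<le> K * \<epsilon>\<^sup>2 * (4 * ues\<^sup>2 * r * (B + 2) * q) + \<epsilon>\<^sup>2 * noise_const"
    using mult_left_mono[OF second_moments_le[of k], of "K * \<epsilon>\<^sup>2"] K_nonneg
    by (simp add: q_def W_def noise_const_def algebra_simps)
  also have "K * \<epsilon>\<^sup>2 * (4 * ues\<^sup>2 * r * (B + 2) * q) = \<alpha>3 * \<epsilon> * \<epsilon> * (lower_factor * q) / 2"
    using lower_factor_pos by (simp add: \<alpha>3_eq power2_eq_square)
  also have "\<dots> \<le> \<alpha>2 * \<epsilon> * a"
  proof -
    have "\<alpha>3 * \<epsilon> * \<epsilon> * (lower_factor * q) \<le> \<alpha>3 * \<epsilon> * \<epsilon> * (2 * a)"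
      using integral_lower_bound[of k] \<alpha>3_ge_1 eps(1)
      by (intro mult_left_mono) (auto simp: q_def a_def)
    also have "\<dots> \<le> \<alpha>2 * \<epsilon> * (2 * a)"
      using \<alpha>3_eps_le eps(1) envelope_nonneg
      by (intro mult_right_mono) (auto simp: a_def)
    finally show ?thesis
      by simp
  qed
  finally show ?thesis
    using expected_envelope_step[of k] unfolding a_def[symmetric] q_def[symmetric] W_def[symmetric]
    by (simp add: algebra_simps)
qed

lemma expected_envelope_bound:
  "(\<integral>\<omega>. envelope (X k \<omega> - xs) \<partial>M) \<le> (1 - \<alpha>2 * \<epsilon>) ^ k * envelope (x0 - xs) + \<epsilon> * noise_const / \<alpha>2"
proof -
  have "(\<integral>\<omega>. envelope (X k \<omega> - xs) \<partial>M)
      \<le> (1 - \<alpha>2 * \<epsilon>) ^ k * (\<integral>\<omega>. envelope (X 0 \<omega> - xs) \<partial>M) + \<epsilon>\<^sup>2 * noise_const / (1 - (1 - \<alpha>2 * \<epsilon>))"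
    using \<alpha>2_eps_le_1 mult_pos_pos[OF \<alpha>2_pos eps(1)] noise_const_nonneg
    by (intro recurrence_le_geometric[where u = "\<lambda>k. \<integral>\<omega>. envelope (X k \<omega> - xs) \<partial>M"]
        expected_envelope_recursion) auto
  also have "\<dots> = (1 - \<alpha>2 * \<epsilon>) ^ k * envelope (x0 - xs) + \<epsilon> * noise_const / \<alpha>2"
    using eps(1) by (simp add: X_0 prob_space power2_eq_square)
  finally show ?thesis .
qed

lemma mean_square_error_bound:
  "(\<integral>\<^sup>+\<omega>. ennreal ((nc (X k \<omega> - xs))\<^sup>2) \<partial>M)
     \<le> ennreal (\<alpha>1 * (nc (x0 - xs))\<^sup>2 * (1 - \<alpha>2 * \<epsilon>) ^ k
                + (A + 2 * B * (nc xs)\<^sup>2) * (\<alpha>3 / (2 * (B + 2))) * \<epsilon> / \<alpha>2)"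
proof -
  define \<rho> where "\<rho> = (1 - \<alpha>2 * \<epsilon>) ^ k"
  have "0 \<le> \<rho>"
    using \<alpha>2_eps_le_1 by (simp add: \<rho>_def)
  have "(\<integral>\<omega>. (nc (X k \<omega> - xs))\<^sup>2 \<partial>M) \<le> 2 / lower_factor * (\<integral>\<omega>. envelope (X k \<omega> - xs) \<partial>M)"
    using integral_lower_bound[of k] lower_factor_pos by (simp add: field_simps)
  also have "\<dots> \<le> 2 / lower_factor * (\<rho> * envelope (x0 - xs) + \<epsilon> * noise_const / \<alpha>2)"
    using mult_left_mono[OF expected_envelope_bound[of k], of "2 / lower_factor"] lower_factor_pos
    by (simp add: \<rho>_def)
  also have "\<dots> \<le> \<alpha>1 * (nc (x0 - xs))\<^sup>2 * \<rho> + (A + 2 * B * (nc xs)\<^sup>2) * (\<alpha>3 / (2 * (B + 2))) * \<epsilon> / \<alpha>2"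
  proof -
    have "\<rho> / lower_factor * (2 * envelope (x0 - xs)) \<le> \<rho> / lower_factor * (upper_factor * (nc (x0 - xs))\<^sup>2)"
      using \<open>0 \<le> \<rho>\<close> lower_factor_pos by (intro mult_left_mono envelope_upper_bound) auto
    moreover have "2 / lower_factor * (\<epsilon> * noise_const / \<alpha>2)
        = (A + 2 * B * (nc xs)\<^sup>2) * (\<alpha>3 / (2 * (B + 2))) * \<epsilon> / \<alpha>2"
      unfolding \<alpha>3_div_eq noise_const_def using lower_factor_pos \<alpha>2_pos by (simp add: field_simps)
    moreover have "2 / lower_factor * (\<rho> * envelope (x0 - xs) + \<epsilon> * noise_const / \<alpha>2)
        = \<rho> / lower_factor * (2 * envelope (x0 - xs)) + 2 / lower_factor * (\<epsilon> * noise_const / \<alpha>2)"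
      by (simp add: distrib_left)
    moreover have "\<rho> / lower_factor * (upper_factor * (nc (x0 - xs))\<^sup>2) = \<alpha>1 * (nc (x0 - xs))\<^sup>2 * \<rho>"
      by (simp add: \<alpha>1_eq)
    ultimately show ?thesis
      by linarith
  qed
  finally show ?thesis
    unfolding \<rho>_def using integrable_error_power2
    by (simp add: nn_integral_eq_integral ennreal_leI)
qed

end

theorem corollary1:
  fixes M :: "'a measure"
    and nc ne ns :: "real ^ 'n \<Rightarrow> real"
    and H :: "real ^ 'n \<Rightarrow> real ^ 'n"
    and \<gamma> :: real and xstar :: "real ^ 'n"
    and x0 :: "real ^ 'n"
    and w :: "nat \<Rightarrow> 'a \<Rightarrow> real ^ 'n"
    and A B L \<mu> \<epsilon> lcs les ucs ues :: real
  defines "x \<equiv> SA_iter H (\<lambda>_. \<epsilon>) x0 w"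
  defines "F \<equiv> SA_filt M x w"
  defines "\<alpha>1 \<equiv> (1 + \<mu> / lcs\<^sup>2) / (1 + \<mu> / ucs\<^sup>2)"
  defines "\<alpha>2 \<equiv> 1 - \<gamma> * sqrt \<alpha>1"
  defines "\<alpha>3 \<equiv> 4 * ucs\<^sup>2 * ues\<^sup>2 * (B + 2) * L * (lcs\<^sup>2 + \<mu>) / (\<mu> * lcs\<^sup>2 * les\<^sup>2)"
  defines "\<alpha>4 \<equiv> \<alpha>3 / (2 * (B + 2))"
  assumes P: "prob_space M"
    and norms: "is_norm nc" "is_norm ne" "is_norm ns"
    and gamma: "0 < \<gamma>" "\<gamma> < 1"
    and contr: "\<forall>u v. nc (H u - H v) \<le> \<gamma> * nc (u - v)"
    and fixpt: "H xstar = xstar"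
    and w_meas: "\<forall>k. w k \<in> borel_measurable M"
    and w_mean: "\<forall>k i. integrable M (\<lambda>\<omega>. w k \<omega> $ i) \<and>
                   (AE \<omega> in M. real_cond_exp M (F k) (\<lambda>\<omega>. w k \<omega> $ i) \<omega> = 0)"
    and w_var: "\<forall>k. AE \<omega> in M. nn_cond_exp M (F k) (\<lambda>\<omega>. ennreal ((ne (w k \<omega>))\<^sup>2)) \<omega>
                   \<le> ennreal (A + B * (ne (x k \<omega>))\<^sup>2)"
    and AB: "A > 0" "B > 0"
    and smooth: "L_smooth (\<lambda>u. (ns u)\<^sup>2 / 2) ns L"
    and bnds: "0 < lcs" "lcs \<le> 1" "1 \<le> ucs" "0 < les" "les \<le> 1" "1 \<le> ues"
    and equiv_c: "\<forall>u. lcs * nc u \<le> ns u \<and> ns u \<le> ucs * nc u"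
    and equiv_e: "\<forall>u. les * ne u \<le> ns u \<and> ns u \<le> ues * ne u"
    and mu: "\<mu> > 0" "\<alpha>2 > 0"
    and eps: "0 < \<epsilon>" "\<epsilon> \<le> \<alpha>2 / \<alpha>3"
  shows "\<forall>k. (\<integral>\<^sup>+ \<omega>. ennreal ((nc (x k \<omega> - xstar))\<^sup>2) \<partial>M)
           \<le> ennreal (\<alpha>1 * (nc (x0 - xstar))\<^sup>2 * (1 - \<alpha>2 * \<epsilon>) ^ k
                     + (A + 2 * B * (nc xstar)\<^sup>2) * \<alpha>4 * \<epsilon> / \<alpha>2)"
proof -
  interpret sa_setting nc ns ne L \<mu> lcs ucs M H \<gamma> xstar x0 w A B \<epsilon> les ues x F \<alpha>1 \<alpha>2 \<alpha>3
    using P norms gamma contr fixpt w_meas w_mean w_var AB smooth bnds equiv_c equiv_e mu eps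
    by (intro sa_setting.intro moreau_envelope.intro norm_function.intro moreau_envelope_axioms.intro
        sa_setting_axioms.intro) (simp_all add: assms(1-5))
  show ?thesis
    using mean_square_error_bound by (simp add: assms(6))
qed

end
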